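(* Let $f\in I_V(\chi^{-c})$ satisfy $f(g\,\iota(h,h))=\chi(\kappa_V(\det h))f(g)$ for all $g\in G(V^\square)$ and $h\in G(V)$. Then $g\mapsto f(\iota(g,\mathrm{id}_V))$ is a class function on $G(V)$, and for every irreducible representation $\pi$ of $G(V)$ the operator $Z_{V,\chi^{-c},\pi}(f)=\sum_{g\in G(V)}f(\iota(g,\mathrm{id}))\pi(g)$ is a scalar operator.
   Context: Let $\mathbb F$ be a finite field of odd cardinality $q$, $\mathbb E/\mathbb F$ of degree $1$ or $2$ with Galois generator $x\mapsto\bar x$; $\mathcal C$ algebraically closed of characteristic not dividing $q$. $(V,\langle\cdot,\cdot\rangle_V)$ is an $\epsilon$-sesquilinear space over $\mathbb E$ (nondegenerate or identically zero form; $\epsilon_V=1$ if $\mathbb E\ne\mathbb F$) with isometry group $G(V)$. $V^\square=V^+\oplus V^-$ with form $\langle v_1,v_2\rangle-\langle w_1,w_2\rangle$ on $v_1^++w_1^-,v_2^++w_2^-$; $V^\Delta=\{v^++v^-\}$; $\iota(g_1,g_2)(v^++w^-)=(g_1v)^++(g_2w)^-$; $P_V$ the stabilizer of $V^\Delta$. For $\chi:\mathbb E^\times\to\mathcal C^\times$, $\chi^{-c}(x)=\chi(\bar x)^{-1}$, and for a character $\mu$, $I_V(\mu)$ is the space of $f:G(V^\square)\to\mathcal C$ with $f(pg)=\mu(\det(p|_{V^\Delta}))f(g)$ for $p\in P_V$ (nondegenerate case), resp. $f(pg)=\mu(\det(p|_{V^\Delta}))\mu^{-c}(\det(p|_{V^\square/V^\Delta}))f(g)$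 (zero-form case). $\kappa_V:\mathbb E^\times\to\mathbb E^\times$ is $\kappa_V(x)=x$ if the form is nondegenerate and $\kappa_V(x)=x/\bar x$ if it is zero. *)

theory Defs
  imports "Jordan_Normal_Form.Determinant" "HOL-Computational_Algebra.Polynomial"
begin

text \<open>
E is a finite field type 'e, with Galois involution sigma (a field
automorphism with sigma o sigma = id); F is its fixed field.  (E = F iff sigma = id;
otherwise [E:F] = 2.)  V = E^n with coordinates; an epsilon-sesquilinear form on V is
given by its Gram matrix B: <v,w> = sum_ij v_i B_ij sigma(w_j).  Linear maps are n x n
matrices acting on column vectors.  V^square = E^(2n), first n coordinates = V^+,
last n coordinates = V^-.
\<close>

definition field_invol :: "('e::field \<Rightarrow> 'e) \<Rightarrow> bool" where
  "field_invol \<sigma> \<longleftrightarrow> (\<forall>x y. \<sigma> (x + y) = \<sigma> x + \<sigma> y) \<and> (\<forall>x y. \<sigma> (x * y) = \<sigma> x * \<sigma> y)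
      \<and> (\<forall>x. \<sigma> (\<sigma> x) = x)"

definition fixed_field :: "('e \<Rightarrow> 'e) \<Rightarrow> 'e set" where
  "fixed_field \<sigma> = {x. \<sigma> x = x}"

definition sform :: "('e::comm_ring_1 \<Rightarrow> 'e) \<Rightarrow> 'e mat \<Rightarrow> 'e vec \<Rightarrow> 'e vec \<Rightarrow> 'e" where
  "sform \<sigma> B v w = v \<bullet> (B *\<^sub>v map_vec \<sigma> w)"

definition eps_sesq :: "('e::comm_ring_1 \<Rightarrow> 'e) \<Rightarrow> 'e \<Rightarrow> nat \<Rightarrow> 'e mat \<Rightarrow> bool" where
  "eps_sesq \<sigma> \<epsilon> n B \<longleftrightarrow> B \<in> carrier_mat n n \<and>
     (\<forall>v\<in>carrier_vec n. \<forall>w\<in>carrier_vec n. sform \<sigma> B w v = \<epsilon> * \<sigma> (sform \<sigma> B v w))"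

definition nondegenerate :: "('e::comm_ring_1 \<Rightarrow> 'e) \<Rightarrow> nat \<Rightarrow> 'e mat \<Rightarrow> bool" where
  "nondegenerate \<sigma> n B \<longleftrightarrow>
     (\<forall>v\<in>carrier_vec n. (\<forall>w\<in>carrier_vec n. sform \<sigma> B v w = 0) \<longrightarrow> v = 0\<^sub>v n)"

definition zero_form :: "('e::comm_ring_1 \<Rightarrow> 'e) \<Rightarrow> nat \<Rightarrow> 'e mat \<Rightarrow> bool" where
  "zero_form \<sigma> n B \<longleftrightarrow> (\<forall>v\<in>carrier_vec n. \<forall>w\<in>carrier_vec n. sform \<sigma> B v w = 0)"

definition isom_group :: "nat \<Rightarrow> ('e::comm_ring_1 vec \<Rightarrow> 'e vec \<Rightarrow> 'e) \<Rightarrow> 'e mat set" where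
  "isom_group n frm = {g \<in> carrier_mat n n. det g \<noteq> 0 \<and>
      (\<forall>v\<in>carrier_vec n. \<forall>w\<in>carrier_vec n. frm (g *\<^sub>v v) (g *\<^sub>v w) = frm v w)}"

definition GV :: "('e::comm_ring_1 \<Rightarrow> 'e) \<Rightarrow> nat \<Rightarrow> 'e mat \<Rightarrow> 'e mat set" where
  "GV \<sigma> n B = isom_group n (sform \<sigma> B)"

definition sqform :: "('e::comm_ring_1 \<Rightarrow> 'e) \<Rightarrow> nat \<Rightarrow> 'e mat \<Rightarrow> 'e vec \<Rightarrow> 'e vec \<Rightarrow> 'e" where
  "sqform \<sigma> n B x y = sform \<sigma> B (vec_first x n) (vec_first y n) - sform \<sigma> B (vec_last x n) (vec_last y n)"

definition Gsq :: "('e::comm_ring_1 \<Rightarrow> 'e) \<Rightarrow> nat \<Rightarrow> 'e mat \<Rightarrow> 'e mat set" where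
  "Gsq \<sigma> n B = isom_group (2 * n) (sqform \<sigma> n B)"

definition iota :: "nat \<Rightarrow> 'e::zero mat \<Rightarrow> 'e mat \<Rightarrow> 'e mat" where
  "iota n g1 g2 = four_block_mat g1 (0\<^sub>m n n) (0\<^sub>m n n) g2"

definition VDelta :: "nat \<Rightarrow> 'e::zero vec set" where
  "VDelta n = {v @\<^sub>v v | v. v \<in> carrier_vec n}"

definition PV :: "('e::comm_ring_1 \<Rightarrow> 'e) \<Rightarrow> nat \<Rightarrow> 'e mat \<Rightarrow> 'e mat set" where
  "PV \<sigma> n B = {p \<in> Gsq \<sigma> n B. (\<lambda>x. p *\<^sub>v x) ` VDelta n = VDelta n}"

text \<open>det(p restricted to V^Delta), computed in the basis e_j^+ + e_j^- of V^Delta.\<close>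
definition det_Delta :: "nat \<Rightarrow> 'e::comm_ring_1 mat \<Rightarrow> 'e" where
  "det_Delta n p = det (mat n n (\<lambda>(i,j). (p *\<^sub>v (unit_vec n j @\<^sub>v unit_vec n j)) $ i))"

text \<open>det(p acting on V^square / V^Delta), computed in the basis given by the images of
  e_j^+, using the isomorphism V^square / V^Delta = V, v^+ + w^- |-> v - w.\<close>
definition det_Quot :: "nat \<Rightarrow> 'e::comm_ring_1 mat \<Rightarrow> 'e" where
  "det_Quot n p = det (mat n n (\<lambda>(i,j). (p *\<^sub>v (unit_vec n j @\<^sub>v 0\<^sub>v n)) $ i
                                    - (p *\<^sub>v (unit_vec n j @\<^sub>v 0\<^sub>v n)) $ (n + i)))"

text \<open>characters of E^x with values in C^x (values at 0 are irrelevant)\<close>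
definition is_character :: "('e::field \<Rightarrow> 'c::field) \<Rightarrow> bool" where
  "is_character \<chi> \<longleftrightarrow> (\<forall>x y. x \<noteq> 0 \<longrightarrow> y \<noteq> 0 \<longrightarrow> \<chi> (x * y) = \<chi> x * \<chi> y)
      \<and> (\<forall>x. x \<noteq> 0 \<longrightarrow> \<chi> x \<noteq> 0)"

definition conj_inv_char :: "('e \<Rightarrow> 'e) \<Rightarrow> ('e \<Rightarrow> 'c::field) \<Rightarrow> 'e \<Rightarrow> 'c" where
  "conj_inv_char \<sigma> \<chi> x = inverse (\<chi> (\<sigma> x))"

text \<open>the induced space I_V(mu), membership of f.  In the degenerate situation n = 0 the
  form is both nondegenerate and zero; then both conventions agree.\<close>
definition in_IV :: "('e::field \<Rightarrow> 'e) \<Rightarrow> nat \<Rightarrow> 'e mat \<Rightarrow> ('e \<Rightarrow> 'c::field) \<Rightarrow> ('e mat \<Rightarrow> 'c) \<Rightarrow> bool" where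
  "in_IV \<sigma> n B \<mu> f \<longleftrightarrow>
    (if nondegenerate \<sigma> n B then
       (\<forall>p\<in>PV \<sigma> n B. \<forall>g\<in>Gsq \<sigma> n B. f (p * g) = \<mu> (det_Delta n p) * f g)
     else
       (\<forall>p\<in>PV \<sigma> n B. \<forall>g\<in>Gsq \<sigma> n B.
          f (p * g) = \<mu> (det_Delta n p) * conj_inv_char \<sigma> \<mu> (det_Quot n p) * f g))"

definition kappaV :: "('e::field \<Rightarrow> 'e) \<Rightarrow> nat \<Rightarrow> 'e mat \<Rightarrow> 'e \<Rightarrow> 'e" where
  "kappaV \<sigma> n B x = (if nondegenerate \<sigma> n B then x else x / \<sigma> x)"

definition is_rep :: "nat \<Rightarrow> 'e::semiring_1 mat set \<Rightarrow> nat \<Rightarrow> ('e mat \<Rightarrow> 'c::field mat) \<Rightarrow> bool" where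
  "is_rep n H m \<pi> \<longleftrightarrow> (\<forall>g\<in>H. \<pi> g \<in> carrier_mat m m) \<and> \<pi> (1\<^sub>m n) = 1\<^sub>m m
     \<and> (\<forall>g\<in>H. \<forall>h\<in>H. \<pi> (g * h) = \<pi> g * \<pi> h)"

definition is_subspace :: "nat \<Rightarrow> 'c::field vec set \<Rightarrow> bool" where
  "is_subspace m U \<longleftrightarrow> U \<subseteq> carrier_vec m \<and> 0\<^sub>v m \<in> U \<and> (\<forall>u\<in>U. \<forall>w\<in>U. u + w \<in> U)
     \<and> (\<forall>c. \<forall>u\<in>U. c \<cdot>\<^sub>v u \<in> U)"

definition irreducible_rep :: "nat \<Rightarrow> 'e::semiring_1 mat set \<Rightarrow> nat \<Rightarrow> ('e mat \<Rightarrow> 'c::field mat) \<Rightarrow> bool" where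
  "irreducible_rep n H m \<pi> \<longleftrightarrow> is_rep n H m \<pi> \<and> m > 0 \<and>
     \<not> (\<exists>U. is_subspace m U \<and> U \<noteq> {0\<^sub>v m} \<and> U \<noteq> carrier_vec m \<and>
            (\<forall>g\<in>H. \<forall>u\<in>U. \<pi> g *\<^sub>v u \<in> U))"

definition Zop :: "('e::field \<Rightarrow> 'e) \<Rightarrow> nat \<Rightarrow> 'e mat \<Rightarrow> nat \<Rightarrow> ('e mat \<Rightarrow> 'c::field mat)
                    \<Rightarrow> ('e mat \<Rightarrow> 'c) \<Rightarrow> 'c mat" where
  "Zop \<sigma> n B m \<pi> f = mat m m (\<lambda>(i,j). \<Sum>g\<in>GV \<sigma> n B. f (iota n g (1\<^sub>m n)) * \<pi> g $$ (i,j))"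

definition alg_closed_field :: "'c::field itself \<Rightarrow> bool" where
  "alg_closed_field _ \<longleftrightarrow> (\<forall>p :: 'c poly. degree p > 0 \<longrightarrow> (\<exists>x. poly p x = 0))"

end

theory Submission
  imports Defs "Jordan_Normal_Form.Char_Poly"
begin

text \<open>
  For h in G(V) the element iota(h,h) lies in P_V and acts on V^Delta and on V^square/V^Delta
  through h, so left translation by it multiplies f by chi^{-c}(det h), times chi(det h) in the
  zero-form case, while right translation by iota(h^{-1},h^{-1}) multiplies f by
  chi(kappa_V(det h^{-1})).  The two factors cancel (for a nondegenerate form because an isometry
  satisfies det h * bar(det h) = 1), so f is invariant under conjugation by iota(h,h).  As
  iota(h,h) iota(g,1) iota(h,h)^{-1} = iota(h g h^{-1}, 1), g \<mapsto> f(iota(g,1)) is a class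
  function, hence Z commutes with every pi(h), and Schur's lemma makes it scalar: over an
  algebraically closed field an eigenspace of Z is a nonzero invariant subspace.
\<close>

lemma field_invol_hom:
  assumes "field_invol (\<sigma> :: 'e::field \<Rightarrow> 'e)"
  shows "field_hom \<sigma>"
proof -
  have add: "\<And>x y. \<sigma> (x + y) = \<sigma> x + \<sigma> y" and mult: "\<And>x y. \<sigma> (x * y) = \<sigma> x * \<sigma> y"
    and invol: "\<And>x. \<sigma> (\<sigma> x) = x"
    using assms unfolding field_invol_def by auto
  have "\<sigma> 0 = 0" using add[of 0 0] by (metis add_cancel_right_right add_0)
  moreover have "\<sigma> 1 = 1" using mult[of 1 "\<sigma> 1"] invol[of 1] by simp
  ultimately show ?thesis by unfold_locales (simp_all add: add mult)
qed

lemma field_invol_involutive: "field_invol \<sigma> \<Longrightarrow> \<sigma> (\<sigma> x) = x"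
  unfolding field_invol_def by blast

lemma conj_inv_char_conj_inv_char:
  assumes "field_invol \<sigma>"
  shows "conj_inv_char \<sigma> (conj_inv_char \<sigma> \<chi>) = \<chi>"
  by (rule ext) (simp add: conj_inv_char_def field_invol_involutive[OF assms])

lemma character_nonzero: "is_character \<chi> \<Longrightarrow> x \<noteq> 0 \<Longrightarrow> \<chi> x \<noteq> 0"
  unfolding is_character_def by blast

lemma character_mult: "is_character \<chi> \<Longrightarrow> x \<noteq> 0 \<Longrightarrow> y \<noteq> 0 \<Longrightarrow> \<chi> (x * y) = \<chi> x * \<chi> y"
  unfolding is_character_def by blast

lemma character_divide:
  assumes chi: "is_character \<chi>" and x: "x \<noteq> 0" and y: "y \<noteq> 0"
  shows "\<chi> (x / y) = \<chi> x / \<chi> y"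
proof -
  have "\<chi> (x / y) * \<chi> y = \<chi> x"
    using character_mult[OF chi, of "x / y" y] x y by simp
  then show ?thesis using character_nonzero[OF chi y] by (simp add: field_simps)
qed

lemma isom_group_carrier: "g \<in> isom_group n frm \<Longrightarrow> g \<in> carrier_mat n n"
  and isom_group_det: "g \<in> isom_group n frm \<Longrightarrow> det g \<noteq> 0"
  and isom_group_isometry: "g \<in> isom_group n frm \<Longrightarrow> v \<in> carrier_vec n \<Longrightarrow> w \<in> carrier_vec n \<Longrightarrow>
    frm (g *\<^sub>v v) (g *\<^sub>v w) = frm v w"
  unfolding isom_group_def by auto

lemma isom_group_one: "1\<^sub>m n \<in> isom_group n (frm :: 'a::comm_ring_1 vec \<Rightarrow> _)"
  unfolding isom_group_def by auto

lemma isom_group_mult: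
  fixes g h :: "'a::idom mat"
  assumes g: "g \<in> isom_group n frm" and h: "h \<in> isom_group n frm"
  shows "g * h \<in> isom_group n frm"
proof -
  have gc: "g \<in> carrier_mat n n" and hc: "h \<in> carrier_mat n n"
    using g h isom_group_carrier by auto
  have "det (g * h) \<noteq> 0"
    using det_mult[OF gc hc] isom_group_det[OF g] isom_group_det[OF h] by simp
  moreover have "frm ((g * h) *\<^sub>v v) ((g * h) *\<^sub>v w) = frm v w"
    if "v \<in> carrier_vec n" "w \<in> carrier_vec n" for v w
    using that isom_group_isometry[OF g] isom_group_isometry[OF h] gc hc by simp
  ultimately show ?thesis using gc hc unfolding isom_group_def by auto
qed

lemma isom_group_right_inverse:
  fixes h h' :: "'a::comm_ring_1 mat"
  assumes h: "h \<in> isom_group n frm" and h'c: "h' \<in> carrier_mat n n" and inv: "h * h' = 1\<^sub>m n"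
  shows "h' \<in> isom_group n frm"
proof -
  have hc: "h \<in> carrier_mat n n" using h isom_group_carrier by auto
  have "det h * det h' = 1" using det_mult[OF hc h'c] inv by simp
  then have "det h' \<noteq> 0" by auto
  moreover have "frm (h' *\<^sub>v v) (h' *\<^sub>v w) = frm v w"
    if v: "v \<in> carrier_vec n" and w: "w \<in> carrier_vec n" for v w
  proof -
    have "frm (h' *\<^sub>v v) (h' *\<^sub>v w) = frm (h *\<^sub>v (h' *\<^sub>v v)) (h *\<^sub>v (h' *\<^sub>v w))"
      using isom_group_isometry[OF h] v w h'c by simp
    also have "\<dots> = frm v w"
      using v w hc h'c inv by (simp add: assoc_mult_mat_vec[symmetric])
    finally show ?thesis .
  qed
  ultimately show ?thesis using h'c unfolding isom_group_def by auto
qed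

lemma isom_group_inverse:
  fixes h :: "'a::field mat"
  assumes h: "h \<in> isom_group n frm"
  obtains h' where "h' \<in> isom_group n frm" "h * h' = 1\<^sub>m n" "h' * h = 1\<^sub>m n"
proof -
  have hc: "h \<in> carrier_mat n n" using h isom_group_carrier by auto
  from det_non_zero_imp_unit[OF hc isom_group_det[OF h], of undefined]
  obtain h' where "h' \<in> carrier_mat n n" "h * h' = 1\<^sub>m n" "h' * h = 1\<^sub>m n"
    unfolding Units_def ring_mat_def by auto
  with isom_group_right_inverse[OF h] that show ?thesis by blast
qed

lemma GV_carrier: "g \<in> GV \<sigma> n B \<Longrightarrow> g \<in> carrier_mat n n"
  and GV_det: "g \<in> GV \<sigma> n B \<Longrightarrow> det g \<noteq> 0"
  and GV_isometry: "g \<in> GV \<sigma> n B \<Longrightarrow> v \<in> carrier_vec n \<Longrightarrow> w \<in> carrier_vec n \<Longrightarrow>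
    sform \<sigma> B (g *\<^sub>v v) (g *\<^sub>v w) = sform \<sigma> B v w"
  unfolding GV_def by (fact isom_group_carrier isom_group_det isom_group_isometry)+

lemma GV_one: "1\<^sub>m n \<in> GV \<sigma> n (B :: 'a::comm_ring_1 mat)"
  unfolding GV_def by (rule isom_group_one)

lemma GV_mult: "g \<in> GV \<sigma> n B \<Longrightarrow> h \<in> GV \<sigma> n B \<Longrightarrow> g * h \<in> GV \<sigma> n (B :: 'a::idom mat)"
  unfolding GV_def by (rule isom_group_mult)

lemma GV_inverse:
  assumes "h \<in> GV \<sigma> n (B :: 'a::field mat)"
  obtains h' where "h' \<in> GV \<sigma> n B" "h * h' = 1\<^sub>m n" "h' * h = 1\<^sub>m n"
  using isom_group_inverse assms unfolding GV_def by blast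

lemma Gsq_mult: "g \<in> Gsq \<sigma> n B \<Longrightarrow> h \<in> Gsq \<sigma> n B \<Longrightarrow> g * h \<in> Gsq \<sigma> n (B :: 'a::idom mat)"
  unfolding Gsq_def by (rule isom_group_mult)

lemma vec_first_append[simp]: "x \<in> carrier_vec n \<Longrightarrow> vec_first (x @\<^sub>v y) n = x"
  unfolding vec_first_def by (intro eq_vecI) auto

lemma vec_last_append[simp]: "y \<in> carrier_vec n \<Longrightarrow> vec_last (x @\<^sub>v y) n = y"
  unfolding vec_last_def by (intro eq_vecI) auto

lemma carrier_vec_double_cases:
  assumes "z \<in> carrier_vec (2 * n)"
  obtains x y where "x \<in> carrier_vec n" "y \<in> carrier_vec n" "z = x @\<^sub>v y"
proof -
  have "z \<in> carrier_vec (n + n)" using assms by (simp add: mult_2)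
  from vec_first_last_append[OF this] show ?thesis
    using that[of "vec_first z n" "vec_last z n"] by auto
qed

lemma iota_carrier[simp]:
  "a \<in> carrier_mat n n \<Longrightarrow> b \<in> carrier_mat n n \<Longrightarrow> iota n a b \<in> carrier_mat (2 * n) (2 * n)"
  unfolding iota_def by (metis four_block_carrier_mat mult_2)

lemma iota_mult:
  "a \<in> carrier_mat n n \<Longrightarrow> b \<in> carrier_mat n n \<Longrightarrow> c \<in> carrier_mat n n \<Longrightarrow> d \<in> carrier_mat n n \<Longrightarrow>
   iota n a b * iota n c d = iota n (a * c) (b * d)"
  unfolding iota_def by (subst mult_four_block_mat) auto

lemma iota_mult_vec:
  "a \<in> carrier_mat n n \<Longrightarrow> b \<in> carrier_mat n n \<Longrightarrow> x \<in> carrier_vec n \<Longrightarrow> y \<in> carrier_vec n \<Longrightarrow>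
   iota n a b *\<^sub>v (x @\<^sub>v y) = (a *\<^sub>v x) @\<^sub>v (b *\<^sub>v y)"
  unfolding iota_def by (subst four_block_mat_mult_vec) auto

lemma det_iota:
  "a \<in> carrier_mat n n \<Longrightarrow> b \<in> carrier_mat n n \<Longrightarrow> det (iota n a b) = det a * (det b :: 'a::idom)"
  unfolding iota_def by (rule det_four_block_mat_lower_left_zero) auto

lemma iota_Gsq:
  fixes a b :: "'e::idom mat"
  assumes a: "a \<in> GV \<sigma> n B" and b: "b \<in> GV \<sigma> n B"
  shows "iota n a b \<in> Gsq \<sigma> n B"
proof -
  have ac: "a \<in> carrier_mat n n" and bc: "b \<in> carrier_mat n n" using GV_carrier[OF a] GV_carrier[OF b] .
  have "det (iota n a b) \<noteq> 0" using det_iota[OF ac bc] GV_det[OF a] GV_det[OF b] by simp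
  moreover have "sqform \<sigma> n B (iota n a b *\<^sub>v v) (iota n a b *\<^sub>v w) = sqform \<sigma> n B v w"
    if v: "v \<in> carrier_vec (2 * n)" and w: "w \<in> carrier_vec (2 * n)" for v w
  proof -
    obtain v1 v2 where "v1 \<in> carrier_vec n" "v2 \<in> carrier_vec n" "v = v1 @\<^sub>v v2"
      using carrier_vec_double_cases[OF v] .
    moreover obtain w1 w2 where "w1 \<in> carrier_vec n" "w2 \<in> carrier_vec n" "w = w1 @\<^sub>v w2"
      using carrier_vec_double_cases[OF w] .
    ultimately show ?thesis
      unfolding sqform_def using iota_mult_vec[OF ac bc] GV_isometry[OF a] GV_isometry[OF b] ac bc
      by simp
  qed
  ultimately show ?thesis unfolding Gsq_def isom_group_def using ac bc by auto
qed

lemma iota_diag_PV: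
  fixes h h' :: "'e::idom mat"
  assumes h: "h \<in> GV \<sigma> n B" and h': "h' \<in> GV \<sigma> n B" and inv: "h * h' = 1\<^sub>m n"
  shows "iota n h h \<in> PV \<sigma> n B"
proof -
  have hc: "h \<in> carrier_mat n n" and h'c: "h' \<in> carrier_mat n n" using GV_carrier[OF h] GV_carrier[OF h'] .
  have "(\<lambda>x. iota n h h *\<^sub>v x) ` VDelta n = VDelta n"
  proof
    show "(\<lambda>x. iota n h h *\<^sub>v x) ` VDelta n \<subseteq> VDelta n"
      using iota_mult_vec[OF hc hc] hc unfolding VDelta_def by fastforce
    show "VDelta n \<subseteq> (\<lambda>x. iota n h h *\<^sub>v x) ` VDelta n"
    proof
      fix z :: "'e vec" assume "z \<in> VDelta n"
      then obtain v where v: "v \<in> carrier_vec n" "z = v @\<^sub>v v" unfolding VDelta_def by auto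
      have "h *\<^sub>v (h' *\<^sub>v v) = v" using v hc h'c inv by (simp add: assoc_mult_mat_vec[symmetric])
      then have "z = iota n h h *\<^sub>v ((h' *\<^sub>v v) @\<^sub>v (h' *\<^sub>v v))"
        using iota_mult_vec[OF hc hc] v h'c by simp
      moreover have "(h' *\<^sub>v v) @\<^sub>v (h' *\<^sub>v v) \<in> VDelta n" unfolding VDelta_def using h'c v by auto
      ultimately show "z \<in> (\<lambda>x. iota n h h *\<^sub>v x) ` VDelta n" by blast
    qed
  qed
  then show ?thesis unfolding PV_def using iota_Gsq[OF h h] by auto
qed

lemma det_Delta_iota_diag:
  assumes "h \<in> carrier_mat n n"
  shows "det_Delta n (iota n h h) = det h"
proof -
  have "mat n n (\<lambda>(i,j). (iota n h h *\<^sub>v (unit_vec n j @\<^sub>v unit_vec n j)) $ i) = h"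
    using assms by (intro eq_matI) (auto simp: iota_mult_vec)
  then show ?thesis unfolding det_Delta_def by simp
qed

lemma det_Quot_iota_diag:
  assumes "h \<in> carrier_mat n n"
  shows "det_Quot n (iota n h h) = (det h :: 'a::comm_ring_1)"
proof -
  have "mat n n (\<lambda>(i,j). (iota n h h *\<^sub>v (unit_vec n j @\<^sub>v 0\<^sub>v n)) $ i
                       - (iota n h h *\<^sub>v (unit_vec n j @\<^sub>v 0\<^sub>v n)) $ (n + i)) = h"
    using assms by (intro eq_matI) (auto simp: iota_mult_vec)
  then show ?thesis unfolding det_Quot_def by simp
qed

subsection \<open>Determinants of isometries of a nondegenerate form\<close>

lemma nondegenerate_det_nonzero:
  assumes Bc: "B \<in> carrier_mat n n" and nd: "nondegenerate \<sigma> n (B :: 'e::field mat)"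
  shows "det B \<noteq> 0"
proof
  assume "det B = 0"
  then obtain v where v: "v \<in> carrier_vec n" "v \<noteq> 0\<^sub>v n" "transpose_mat B *\<^sub>v v = 0\<^sub>v n"
    using det_0_iff_vec_prod_zero[of "transpose_mat B" n] det_transpose[OF Bc] Bc by auto
  have "sform \<sigma> B v w = 0" if w: "w \<in> carrier_vec n" for w
    using transpose_vec_mult_scalar[OF Bc, of "map_vec \<sigma> w" v] v w unfolding sform_def by simp
  then show False using nd v unfolding nondegenerate_def by auto
qed

lemma sform_mult_mat_vec:
  assumes hom: "semiring_hom \<sigma>"
    and Bc: "B \<in> carrier_mat n n" and hc: "h \<in> carrier_mat n n" and kc: "k \<in> carrier_mat n n"
    and v: "v \<in> carrier_vec n" and w: "w \<in> carrier_vec n"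
  shows "sform \<sigma> B (h *\<^sub>v v) (k *\<^sub>v w) = sform \<sigma> (transpose_mat h * B * map_mat \<sigma> k) v (w :: 'a::comm_ring_1 vec)"
proof -
  interpret \<sigma>: semiring_hom \<sigma> by (rule hom)
  have Tc: "transpose_mat h \<in> carrier_mat n n" and Kc: "map_mat \<sigma> k \<in> carrier_mat n n"
    and Wc: "map_vec \<sigma> w \<in> carrier_vec n" using hc kc w by auto
  have "sform \<sigma> B (h *\<^sub>v v) (k *\<^sub>v w) = (h *\<^sub>v v) \<bullet> (B *\<^sub>v (map_mat \<sigma> k *\<^sub>v map_vec \<sigma> w))"
    unfolding sform_def \<sigma>.mult_mat_vec_hom[OF kc w] ..
  also have "\<dots> = v \<bullet> (transpose_mat h *\<^sub>v (B *\<^sub>v (map_mat \<sigma> k *\<^sub>v map_vec \<sigma> w)))"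
    using transpose_vec_mult_scalar[of "transpose_mat h" n n _ v] hc Bc Kc Wc v by simp
  also have "transpose_mat h *\<^sub>v (B *\<^sub>v (map_mat \<sigma> k *\<^sub>v map_vec \<sigma> w))
      = (transpose_mat h * B * map_mat \<sigma> k) *\<^sub>v map_vec \<sigma> w"
    using assoc_mult_mat_vec[OF mult_carrier_mat[OF Tc Bc] Kc Wc]
      assoc_mult_mat_vec[OF Tc Bc mult_mat_vec_carrier[OF Kc Wc]] by simp
  finally show ?thesis unfolding sform_def .
qed

lemma sform_unit_vec:
  assumes hom: "semiring_hom \<sigma>" and Bc: "B \<in> carrier_mat n n" and i: "i < n" and j: "j < n"
  shows "sform \<sigma> B (unit_vec n i) (unit_vec n j) = (B $$ (i, j) :: 'a::comm_ring_1)"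
proof -
  interpret \<sigma>: semiring_hom \<sigma> by (rule hom)
  have "map_vec \<sigma> (unit_vec n j) = unit_vec n j" by (intro eq_vecI) (auto simp: unit_vec_def)
  then show ?thesis unfolding sform_def using Bc i j by simp
qed

lemma sform_eq_imp_eq:
  assumes hom: "semiring_hom \<sigma>" and Ac: "A \<in> carrier_mat n n" and Bc: "B \<in> carrier_mat n n"
    and eq: "\<And>v w. v \<in> carrier_vec n \<Longrightarrow> w \<in> carrier_vec n \<Longrightarrow> sform \<sigma> A v w = sform \<sigma> B v w"
  shows "A = (B :: 'a::comm_ring_1 mat)"
  using Ac Bc eq[of "unit_vec n i" "unit_vec n j" for i j]
  by (intro eq_matI) (auto simp: sform_unit_vec[OF hom, symmetric])

lemma GV_gram_mat:
  assumes invol: "field_invol \<sigma>" and Bc: "B \<in> carrier_mat n n" and h: "h \<in> GV \<sigma> n B"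
  shows "transpose_mat h * B * map_mat \<sigma> h = B"
proof -
  interpret \<sigma>: field_hom \<sigma> by (rule field_invol_hom[OF invol])
  have hc: "h \<in> carrier_mat n n" using GV_carrier[OF h] .
  show ?thesis
    using hc Bc GV_isometry[OF h] sform_mult_mat_vec[OF \<sigma>.semiring_hom_axioms Bc hc hc]
    by (intro sform_eq_imp_eq[OF \<sigma>.semiring_hom_axioms, of _ n]) auto
qed

lemma GV_det_unitary:
  assumes invol: "field_invol \<sigma>" and Bc: "B \<in> carrier_mat n n" and dB: "det B \<noteq> 0"
    and h: "h \<in> GV \<sigma> n (B :: 'e::field mat)"
  shows "det h * \<sigma> (det h) = 1"
proof -
  interpret \<sigma>: field_hom \<sigma> by (rule field_invol_hom[OF invol])
  have hc: "h \<in> carrier_mat n n" using GV_carrier[OF h] .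
  have "det (transpose_mat h) * det B * det (map_mat \<sigma> h) = det B"
    using arg_cong[OF GV_gram_mat[OF invol Bc h], of det] hc Bc
    by (metis det_mult map_carrier_mat mult_carrier_mat transpose_carrier_mat)
  then have "(det h * \<sigma> (det h)) * det B = 1 * det B"
    unfolding det_transpose[OF hc] \<sigma>.hom_det by (simp add: ac_simps)
  then show ?thesis using dB by simp
qed

subsection \<open>Invariance of f under conjugation by iota(h,h)\<close>

definition PV_char :: "('e::field \<Rightarrow> 'e) \<Rightarrow> nat \<Rightarrow> 'e mat \<Rightarrow> ('e \<Rightarrow> 'c::field) \<Rightarrow> 'e mat \<Rightarrow> 'c" where
  "PV_char \<sigma> n B \<mu> p =
    (if nondegenerate \<sigma> n B then \<mu> (det_Delta n p)
     else \<mu> (det_Delta n p) * conj_inv_char \<sigma> \<mu> (det_Quot n p))"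

lemma in_IV_iff:
  "in_IV \<sigma> n B \<mu> f \<longleftrightarrow> (\<forall>p\<in>PV \<sigma> n B. \<forall>g\<in>Gsq \<sigma> n B. f (p * g) = PV_char \<sigma> n B \<mu> p * f g)"
  unfolding in_IV_def PV_char_def by simp

lemma PV_char_iota_diag:
  assumes "h \<in> carrier_mat n n"
  shows "PV_char \<sigma> n B \<mu> (iota n h h) =
    (if nondegenerate \<sigma> n B then \<mu> (det h) else \<mu> (det h) * conj_inv_char \<sigma> \<mu> (det h))"
  using assms by (simp add: PV_char_def det_Delta_iota_diag det_Quot_iota_diag)

lemma kappaV_PV_char_cancel:
  assumes invol: "field_invol \<sigma>" and chi: "is_character \<chi>" and Bc: "B \<in> carrier_mat n n"
    and h: "h \<in> GV \<sigma> n B"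
  shows "\<chi> (kappaV \<sigma> n B (inverse (det h))) * PV_char \<sigma> n B (conj_inv_char \<sigma> \<chi>) (iota n h h) = 1"
proof -
  interpret \<sigma>: field_hom \<sigma> by (rule field_invol_hom[OF invol])
  have hc: "h \<in> carrier_mat n n" and d: "det h \<noteq> 0" using GV_carrier[OF h] GV_det[OF h] .
  show ?thesis
  proof (cases "nondegenerate \<sigma> n B")
    case True
    have "det h * \<sigma> (det h) = 1"
      by (rule GV_det_unitary[OF invol Bc nondegenerate_det_nonzero[OF Bc True] h])
    then have "\<sigma> (det h) = inverse (det h)" by (simp add: inverse_unique)
    then show ?thesis
      using True hc character_nonzero[OF chi, of "inverse (det h)"] d
      by (simp add: kappaV_def PV_char_iota_diag conj_inv_char_def)
  next
    case False
    have "kappaV \<sigma> n B (inverse (det h)) = \<sigma> (det h) / det h"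
      using False by (simp add: kappaV_def \<sigma>.hom_inverse divide_inverse mult.commute)
    then have "\<chi> (kappaV \<sigma> n B (inverse (det h))) = \<chi> (\<sigma> (det h)) / \<chi> (det h)"
      using character_divide[OF chi] d by simp
    moreover have "conj_inv_char \<sigma> (conj_inv_char \<sigma> \<chi>) (det h) = \<chi> (det h)"
      by (simp add: conj_inv_char_conj_inv_char[OF invol])
    ultimately show ?thesis
      using False hc d character_nonzero[OF chi, of "det h"] character_nonzero[OF chi, of "\<sigma> (det h)"]
      by (simp add: PV_char_iota_diag conj_inv_char_def)
  qed
qed

lemma iota_diag_conj_invariant:
  assumes invol: "field_invol \<sigma>" and Bc: "B \<in> carrier_mat n n" and chi: "is_character \<chi>"
    and f_ind: "in_IV \<sigma> n B (conj_inv_char \<sigma> \<chi>) f"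
    and f_inv: "\<forall>g\<in>Gsq \<sigma> n B. \<forall>h\<in>GV \<sigma> n B. f (g * iota n h h) = \<chi> (kappaV \<sigma> n B (det h)) * f g"
    and h: "h \<in> GV \<sigma> n B" and h': "h' \<in> GV \<sigma> n B" and inv: "h * h' = 1\<^sub>m n"
    and g: "g \<in> Gsq \<sigma> n B"
  shows "f (iota n h h * g * iota n h' h') = f g"
proof -
  have hc: "h \<in> carrier_mat n n" and h'c: "h' \<in> carrier_mat n n" using GV_carrier[OF h] GV_carrier[OF h'] .
  have "det h * det h' = 1" using det_mult[OF hc h'c] inv by simp
  then have det_h': "det h' = inverse (det h)" by (simp add: inverse_unique)
  have P: "iota n h h \<in> PV \<sigma> n B" by (rule iota_diag_PV[OF h h' inv])
  then have "iota n h h * g \<in> Gsq \<sigma> n B" using Gsq_mult g unfolding PV_def by blast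
  then have "f (iota n h h * g * iota n h' h') = \<chi> (kappaV \<sigma> n B (inverse (det h))) * f (iota n h h * g)"
    using f_inv h' det_h' by simp
  also have "\<dots> = \<chi> (kappaV \<sigma> n B (inverse (det h))) * (PV_char \<sigma> n B (conj_inv_char \<sigma> \<chi>) (iota n h h) * f g)"
    using f_ind P g unfolding in_IV_iff by simp
  also have "\<dots> = f g"
    using kappaV_PV_char_cancel[OF invol chi Bc h] by (simp add: mult.assoc[symmetric])
  finally show ?thesis .
qed

lemma class_function_iota:
  assumes invol: "field_invol \<sigma>" and Bc: "B \<in> carrier_mat n n" and chi: "is_character \<chi>"
    and f_ind: "in_IV \<sigma> n B (conj_inv_char \<sigma> \<chi>) f"
    and f_inv: "\<forall>g\<in>Gsq \<sigma> n B. \<forall>h\<in>GV \<sigma> n B. f (g * iota n h h) = \<chi> (kappaV \<sigma> n B (det h)) * f g"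
    and g: "g \<in> GV \<sigma> n B" and h: "h \<in> GV \<sigma> n B" and h': "h' \<in> GV \<sigma> n B" and inv: "h * h' = 1\<^sub>m n"
  shows "f (iota n (h * g * h') (1\<^sub>m n)) = f (iota n g (1\<^sub>m n))"
proof -
  have "g \<in> carrier_mat n n" "h \<in> carrier_mat n n" "h' \<in> carrier_mat n n"
    using GV_carrier[OF g] GV_carrier[OF h] GV_carrier[OF h'] .
  then have "iota n (h * g * h') (1\<^sub>m n) = iota n h h * iota n g (1\<^sub>m n) * iota n h' h'"
    using inv by (simp add: iota_mult)
  then show ?thesis
    using iota_diag_conj_invariant[OF invol Bc chi f_ind f_inv h h' inv iota_Gsq[OF g GV_one]] by simp
qed

definition mat_weighted_sum :: "nat \<Rightarrow> 'b set \<Rightarrow> ('b \<Rightarrow> 'a::comm_semiring_0) \<Rightarrow> ('b \<Rightarrow> 'a mat) \<Rightarrow> 'a mat" where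
  "mat_weighted_sum m G c P = mat m m (\<lambda>(i, j). \<Sum>g\<in>G. c g * P g $$ (i, j))"

lemma dim_mat_weighted_sum[simp]:
  "dim_row (mat_weighted_sum m G c P) = m" "dim_col (mat_weighted_sum m G c P) = m"
  unfolding mat_weighted_sum_def by simp_all

lemma mat_weighted_sum_carrier[simp]: "mat_weighted_sum m G c P \<in> carrier_mat m m"
  by (simp add: carrier_matI)

lemma Zop_eq_mat_weighted_sum:
  "Zop \<sigma> n B m \<pi> f = mat_weighted_sum m (GV \<sigma> n B) (\<lambda>g. f (iota n g (1\<^sub>m n))) \<pi>"
  unfolding Zop_def mat_weighted_sum_def ..

lemma mat_weighted_sum_mult_right:
  assumes P: "\<And>g. g \<in> G \<Longrightarrow> P g \<in> carrier_mat m m" and Q: "Q \<in> carrier_mat m m"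
  shows "mat_weighted_sum m G c P * Q = mat_weighted_sum m G c (\<lambda>g. P g * Q)"
proof (rule eq_matI)
  fix i j assume "i < dim_row (mat_weighted_sum m G c (\<lambda>g. P g * Q))"
    and "j < dim_col (mat_weighted_sum m G c (\<lambda>g. P g * Q))"
  then have i: "i < m" and j: "j < m" by simp_all
  have "(mat_weighted_sum m G c P * Q) $$ (i, j) = (\<Sum>l<m. (\<Sum>g\<in>G. c g * P g $$ (i, l)) * Q $$ (l, j))"
    using i j Q by (simp add: mat_weighted_sum_def scalar_prod_def atLeast0LessThan)
  also have "\<dots> = (\<Sum>g\<in>G. c g * (\<Sum>l<m. P g $$ (i, l) * Q $$ (l, j)))"
    by (simp add: sum_distrib_right sum_distrib_left mult.assoc sum.swap[of _ G])
  also have "\<dots> = mat_weighted_sum m G c (\<lambda>g. P g * Q) $$ (i, j)"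
  proof -
    have "(P g * Q) $$ (i, j) = (\<Sum>l<m. P g $$ (i, l) * Q $$ (l, j))" if "g \<in> G" for g
      using P[OF that] Q i j by (simp add: scalar_prod_def atLeast0LessThan)
    then show ?thesis using i j by (simp add: mat_weighted_sum_def cong: sum.cong)
  qed
  finally show "(mat_weighted_sum m G c P * Q) $$ (i, j) = mat_weighted_sum m G c (\<lambda>g. P g * Q) $$ (i, j)" .
qed (use Q in auto)

lemma mat_weighted_sum_mult_left:
  assumes P: "\<And>g. g \<in> G \<Longrightarrow> P g \<in> carrier_mat m m" and Q: "Q \<in> carrier_mat m m"
  shows "Q * mat_weighted_sum m G c P = mat_weighted_sum m G c (\<lambda>g. Q * P g)"
proof (rule eq_matI)
  fix i j assume "i < dim_row (mat_weighted_sum m G c (\<lambda>g. Q * P g))"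
    and "j < dim_col (mat_weighted_sum m G c (\<lambda>g. Q * P g))"
  then have i: "i < m" and j: "j < m" by simp_all
  have "(Q * mat_weighted_sum m G c P) $$ (i, j) = (\<Sum>l<m. Q $$ (i, l) * (\<Sum>g\<in>G. c g * P g $$ (l, j)))"
    using i j Q by (simp add: mat_weighted_sum_def scalar_prod_def atLeast0LessThan)
  also have "\<dots> = (\<Sum>g\<in>G. c g * (\<Sum>l<m. Q $$ (i, l) * P g $$ (l, j)))"
    by (simp add: sum_distrib_left sum.swap[of _ G] ac_simps)
  also have "\<dots> = mat_weighted_sum m G c (\<lambda>g. Q * P g) $$ (i, j)"
  proof -
    have "(Q * P g) $$ (i, j) = (\<Sum>l<m. Q $$ (i, l) * P g $$ (l, j))" if "g \<in> G" for g
      using P[OF that] Q i j by (simp add: scalar_prod_def atLeast0LessThan)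
    then show ?thesis using i j by (simp add: mat_weighted_sum_def cong: sum.cong)
  qed
  finally show "(Q * mat_weighted_sum m G c P) $$ (i, j) = mat_weighted_sum m G c (\<lambda>g. Q * P g) $$ (i, j)" .
qed (use Q in auto)

lemma mat_weighted_sum_reindex:
  assumes "bij_betw \<phi> G G"
  shows "mat_weighted_sum m G (\<lambda>g. c (\<phi> g)) (\<lambda>g. P (\<phi> g)) = mat_weighted_sum m G c P"
proof -
  have "(\<Sum>g\<in>G. c (\<phi> g) * P (\<phi> g) $$ (i, j)) = (\<Sum>g\<in>G. c g * P g $$ (i, j))" for i j
    using sum.reindex_bij_betw[OF assms, of "\<lambda>g. c g * P g $$ (i, j)"] .
  then show ?thesis unfolding mat_weighted_sum_def by simp
qed

lemma mat_weighted_sum_cong: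
  "(\<And>g. g \<in> G \<Longrightarrow> c g = c' g) \<Longrightarrow> (\<And>g. g \<in> G \<Longrightarrow> P g = P' g) \<Longrightarrow>
   mat_weighted_sum m G c P = mat_weighted_sum m G c' P'"
  unfolding mat_weighted_sum_def by (auto intro!: eq_matI sum.cong)

lemma conj_mat_cancel:
  fixes h h' k :: "'a::semiring_1 mat"
  assumes hc: "h \<in> carrier_mat n n" and h'c: "h' \<in> carrier_mat n n" and kc: "k \<in> carrier_mat n n"
    and inv: "h' * h = 1\<^sub>m n"
  shows "h * k * h' * h = h * k" and "h' * (h * k * h') * h = k"
proof -
  have hk: "h * k \<in> carrier_mat n n" using hc kc by simp
  have "h * k * h' * h = h * k * (h' * h)" by (rule assoc_mult_mat[OF hk h'c hc])
  then show hkh'h: "h * k * h' * h = h * k" using right_mult_one_mat[OF hk] inv by simp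
  have "h' * (h * k * h') * h = h' * (h * k * h' * h)"
    by (rule assoc_mult_mat[OF h'c mult_carrier_mat[OF hk h'c] hc])
  also have "\<dots> = (h' * h) * k" unfolding hkh'h by (rule assoc_mult_mat[OF h'c hc kc, symmetric])
  finally show "h' * (h * k * h') * h = k" using left_mult_one_mat[OF kc] inv by simp
qed

lemma class_function_mat_weighted_sum_commute:
  fixes B :: "'e::field mat" and \<pi> :: "'e mat \<Rightarrow> 'c::field mat"
  assumes conj_invariant: "\<And>g h h'. g \<in> GV \<sigma> n B \<Longrightarrow> h \<in> GV \<sigma> n B \<Longrightarrow> h' \<in> GV \<sigma> n B \<Longrightarrow> h * h' = 1\<^sub>m n \<Longrightarrow>
      F (h * g * h') = F g"
    and rep: "is_rep n (GV \<sigma> n B) m \<pi>" and h: "h \<in> GV \<sigma> n B"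
  shows "mat_weighted_sum m (GV \<sigma> n B) F \<pi> * \<pi> h = \<pi> h * mat_weighted_sum m (GV \<sigma> n B) F \<pi>"
proof -
  let ?G = "GV \<sigma> n B"
  obtain h' where h': "h' \<in> ?G" "h * h' = 1\<^sub>m n" "h' * h = 1\<^sub>m n" using GV_inverse[OF h] .
  have Gc: "\<And>k. k \<in> ?G \<Longrightarrow> k \<in> carrier_mat n n" by (rule GV_carrier)
  have hc: "h \<in> carrier_mat n n" and h'c: "h' \<in> carrier_mat n n" using Gc h h'(1) by auto
  have \<pi>c: "\<And>g. g \<in> ?G \<Longrightarrow> \<pi> g \<in> carrier_mat m m"
    and \<pi>_mult: "\<And>g k. g \<in> ?G \<Longrightarrow> k \<in> ?G \<Longrightarrow> \<pi> (g * k) = \<pi> g * \<pi> k"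
    using rep unfolding is_rep_def by auto
  have conj: "bij_betw (\<lambda>k. h * k * h') ?G ?G"
  proof (rule bij_betw_byWitness[where f' = "\<lambda>g. h' * g * h"])
    show "\<forall>a\<in>?G. h' * (h * a * h') * h = a" "\<forall>a\<in>?G. h * (h' * a * h) * h' = a"
      using conj_mat_cancel(2)[OF hc h'c Gc h'(3)] conj_mat_cancel(2)[OF h'c hc Gc h'(2)] by blast+
    show "(\<lambda>k. h * k * h') ` ?G \<subseteq> ?G" "(\<lambda>g. h' * g * h) ` ?G \<subseteq> ?G"
      using GV_mult h h'(1) by blast+
  qed
  have "mat_weighted_sum m ?G F \<pi> * \<pi> h = mat_weighted_sum m ?G F (\<lambda>g. \<pi> g * \<pi> h)"
    by (rule mat_weighted_sum_mult_right[OF \<pi>c \<pi>c[OF h]])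
  also have "\<dots> = mat_weighted_sum m ?G F (\<lambda>g. \<pi> (g * h))"
    using \<pi>_mult[OF _ h] by (intro mat_weighted_sum_cong) simp_all
  also have "\<dots> = mat_weighted_sum m ?G (\<lambda>k. F (h * k * h')) (\<lambda>k. \<pi> (h * k * h' * h))"
    using mat_weighted_sum_reindex[OF conj, where c = F and P = "\<lambda>g. \<pi> (g * h)"] by simp
  also have "\<dots> = mat_weighted_sum m ?G F (\<lambda>k. \<pi> (h * k))"
    using conj_invariant h h'(1,2) conj_mat_cancel(1)[OF hc h'c Gc h'(3)]
    by (intro mat_weighted_sum_cong) auto
  also have "\<dots> = mat_weighted_sum m ?G F (\<lambda>g. \<pi> h * \<pi> g)"
    using \<pi>_mult[OF h] by (intro mat_weighted_sum_cong) simp_all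
  also have "\<dots> = \<pi> h * mat_weighted_sum m ?G F \<pi>"
    by (rule mat_weighted_sum_mult_left[OF \<pi>c \<pi>c[OF h], symmetric])
  finally show ?thesis .
qed

subsection \<open>Schur's lemma\<close>

lemma eigenspace_subspace:
  fixes Z :: "'a::field mat"
  assumes Zc: "Z \<in> carrier_mat m m"
  shows "is_subspace m {u \<in> carrier_vec m. Z *\<^sub>v u = c \<cdot>\<^sub>v u}"
  unfolding is_subspace_def using Zc
  by (auto simp: mult_add_distrib_mat_vec smult_add_distrib_vec mult_mat_vec smult_smult_assoc mult.commute)

lemma eigenspace_invariant:
  fixes Z :: "'a::field mat"
  assumes Zc: "Z \<in> carrier_mat m m" and Ac: "A \<in> carrier_mat m m" and comm: "Z * A = A * Z"
    and u: "u \<in> carrier_vec m" and Zu: "Z *\<^sub>v u = c \<cdot>\<^sub>v u"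
  shows "Z *\<^sub>v (A *\<^sub>v u) = c \<cdot>\<^sub>v (A *\<^sub>v u)"
proof -
  have "Z *\<^sub>v (A *\<^sub>v u) = (Z * A) *\<^sub>v u" using Zc Ac u by simp
  also have "\<dots> = (A * Z) *\<^sub>v u" unfolding comm ..
  also have "\<dots> = A *\<^sub>v (c \<cdot>\<^sub>v u)" using Zc Ac u Zu by (simp add: assoc_mult_mat_vec)
  also have "\<dots> = c \<cdot>\<^sub>v (A *\<^sub>v u)" using Ac u by (simp add: mult_mat_vec)
  finally show ?thesis .
qed

lemma alg_closed_eigenvalue:
  assumes "alg_closed_field TYPE('c::field)" and Zc: "(Z :: 'c mat) \<in> carrier_mat m m" and "m > 0"
  shows "\<exists>c. eigenvalue Z c"
proof -
  have "degree (char_poly Z) > 0" using degree_monic_char_poly[OF Zc] \<open>m > 0\<close> by simp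
  then show ?thesis
    using assms(1) eigenvalue_root_char_poly[OF Zc] unfolding alg_closed_field_def by auto
qed

lemma eq_smult_one_matI:
  fixes Z :: "'a::semiring_1 mat"
  assumes Zc: "Z \<in> carrier_mat m m" and Zu: "\<And>u. u \<in> carrier_vec m \<Longrightarrow> Z *\<^sub>v u = c \<cdot>\<^sub>v u"
  shows "Z = c \<cdot>\<^sub>m 1\<^sub>m m"
proof (rule eq_matI)
  fix i j assume "i < dim_row (c \<cdot>\<^sub>m 1\<^sub>m m)" and "j < dim_col (c \<cdot>\<^sub>m 1\<^sub>m m)"
  then have i: "i < m" and j: "j < m" by auto
  have "Z $$ (i, j) = (Z *\<^sub>v unit_vec m j) $ i" using Zc i j by simp
  also have "\<dots> = (c \<cdot>\<^sub>v unit_vec m j) $ i" using Zu by simp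
  finally show "Z $$ (i, j) = (c \<cdot>\<^sub>m 1\<^sub>m m) $$ (i, j)" using i j by (simp add: unit_vec_def)
qed (use Zc in auto)

lemma schur_scalar:
  fixes Z :: "'c::field mat"
  assumes closed: "alg_closed_field TYPE('c)" and irr: "irreducible_rep n G m \<pi>"
    and Zc: "Z \<in> carrier_mat m m" and comm: "\<And>g. g \<in> G \<Longrightarrow> Z * \<pi> g = \<pi> g * Z"
  shows "\<exists>c. Z = c \<cdot>\<^sub>m 1\<^sub>m m"
proof -
  have "m > 0" and \<pi>c: "\<And>g. g \<in> G \<Longrightarrow> \<pi> g \<in> carrier_mat m m"
    using irr unfolding irreducible_rep_def is_rep_def by auto
  then obtain c where "eigenvalue Z c" using alg_closed_eigenvalue[OF closed Zc] by blast
  then obtain v where v: "v \<in> carrier_vec m" "v \<noteq> 0\<^sub>v m" "Z *\<^sub>v v = c \<cdot>\<^sub>v v"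
    unfolding eigenvalue_def eigenvector_def using Zc by auto
  define U where "U = {u \<in> carrier_vec m. Z *\<^sub>v u = c \<cdot>\<^sub>v u}"
  have "is_subspace m U" unfolding U_def by (rule eigenspace_subspace[OF Zc])
  moreover have "U \<noteq> {0\<^sub>v m}" using v unfolding U_def by auto
  moreover have "\<pi> g *\<^sub>v u \<in> U" if g: "g \<in> G" and u: "u \<in> U" for g u
    using eigenspace_invariant[OF Zc \<pi>c[OF g] comm[OF g]] \<pi>c[OF g] u unfolding U_def by auto
  ultimately have "U = carrier_vec m" using irr unfolding irreducible_rep_def by blast
  then have "Z = c \<cdot>\<^sub>m 1\<^sub>m m" using eq_smult_one_matI[OF Zc] unfolding U_def by auto
  then show ?thesis ..
qed

theorem mainTheorem4:
  fixes \<sigma> :: "'e::{finite,field} \<Rightarrow> 'e"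
    and \<epsilon> :: 'e
    and n :: nat
    and B :: "'e mat"
    and \<chi> :: "'e \<Rightarrow> 'c::field"
    and f :: "'e mat \<Rightarrow> 'c"
  assumes invol: "field_invol \<sigma>"
    and q_odd: "odd (card (fixed_field \<sigma>))"
    and C_closed: "alg_closed_field TYPE('c)"
    and C_char: "of_nat (card (fixed_field \<sigma>)) \<noteq> (0::'c)"
    and eps: "\<epsilon> = 1 \<or> \<epsilon> = -1"
    and eps_herm: "\<sigma> \<noteq> id \<Longrightarrow> \<epsilon> = 1"
    and form: "eps_sesq \<sigma> \<epsilon> n B"
    and nd_or_zero: "nondegenerate \<sigma> n B \<or> zero_form \<sigma> n B"
    and chi: "is_character \<chi>"
    and f_ind: "in_IV \<sigma> n B (conj_inv_char \<sigma> \<chi>) f"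
    and f_inv: "\<forall>g\<in>Gsq \<sigma> n B. \<forall>h\<in>GV \<sigma> n B.
                  f (g * iota n h h) = \<chi> (kappaV \<sigma> n B (det h)) * f g"
  shows "(\<forall>g\<in>GV \<sigma> n B. \<forall>h\<in>GV \<sigma> n B. \<forall>h'\<in>GV \<sigma> n B. h * h' = 1\<^sub>m n \<longrightarrow>
            f (iota n (h * g * h') (1\<^sub>m n)) = f (iota n g (1\<^sub>m n)))
       \<and> (\<forall>m \<pi>. irreducible_rep n (GV \<sigma> n B) m \<pi> \<longrightarrow>
            (\<exists>c. Zop \<sigma> n B m \<pi> f = c \<cdot>\<^sub>m 1\<^sub>m m))"
proof -
  have Bc: "B \<in> carrier_mat n n" using form unfolding eps_sesq_def by auto
  note class_function = class_function_iota[OF invol Bc chi f_ind f_inv]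
  have "\<exists>c. Zop \<sigma> n B m \<pi> f = c \<cdot>\<^sub>m 1\<^sub>m m" if irr: "irreducible_rep n (GV \<sigma> n B) m \<pi>" for m \<pi>
  proof -
    have rep: "is_rep n (GV \<sigma> n B) m \<pi>" using irr unfolding irreducible_rep_def by auto
    show ?thesis
      unfolding Zop_eq_mat_weighted_sum
      by (rule schur_scalar[OF C_closed irr mat_weighted_sum_carrier],
          rule class_function_mat_weighted_sum_commute[where F = "\<lambda>g. f (iota n g (1\<^sub>m n))", OF class_function rep])
  qed
  then show ?thesis using class_function by blast
qed

end
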